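(* Let $1\le r\le s\le t$ and let $u=ABCd$, $v=A'B'C'd'$ be distinct vertices of $E3C(r,s,t)$ with $A=A'$, $B=B'$ and $d=d'$ (any $d\in\{0,1,2\}$). Then there exist $2r+2$ pairwise internally disjoint $u$–$v$ paths in $E3C(r,s,t)$, each of length at most $t+6$.
   Context: The exchanged 3-ary $n$-cube $E3C(r,s,t)$ ($r,s,t\ge1$, $n=r+s+t+1$): vertices are strings written $x=ABCd$ with $A\in\{0,1,2\}^r$, $B\in\{0,1,2\}^s$, $C\in\{0,1,2\}^t$, $d\in\{0,1,2\}$. Two distinct vertices $x=ABCd$, $y=A'B'C'd'$ are adjacent iff one of: (E0) $A=A',B=B',C=C'$ and $d\ne d'$; (E1) $d=d'=0$, $A=A'$, $B=B'$ and $C,C'$ differ in exactly one position; (E2) $d=d'=1$, $A=A'$, $C=C'$ and $B,B'$ differ in exactly one position; (E3) $d=d'=2$, $B=B'$, $C=C'$ and $A,A'$ differ in exactly one position. Paths are internally disjoint if they share no vertices other than their endpoints; length = number of edges. *)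

theory Defs
  imports Main
begin

definition tstr :: "nat \<Rightarrow> nat list \<Rightarrow> bool" where
  "tstr n X \<longleftrightarrow> length X = n \<and> set X \<subseteq> {0,1,2}"

definition differ_one :: "nat list \<Rightarrow> nat list \<Rightarrow> bool" where
  "differ_one X Y \<longleftrightarrow> length X = length Y \<and>
     card {i. i < length X \<and> X ! i \<noteq> Y ! i} = 1"

type_synonym e3vert = "nat list \<times> nat list \<times> nat list \<times> nat"

definition e3c_vertices :: "nat \<Rightarrow> nat \<Rightarrow> nat \<Rightarrow> e3vert set" where
  "e3c_vertices r s t = {(A,B,C,d). tstr r A \<and> tstr s B \<and> tstr t C \<and> d \<in> {0,1,2}}"

definition e3c_adj :: "nat \<Rightarrow> nat \<Rightarrow> nat \<Rightarrow> e3vert \<Rightarrow> e3vert \<Rightarrow> bool" where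
  "e3c_adj r s t x y \<longleftrightarrow> x \<in> e3c_vertices r s t \<and> y \<in> e3c_vertices r s t \<and> x \<noteq> y \<and>
     (case x of (A,B,C,d) \<Rightarrow> case y of (A',B',C',d') \<Rightarrow>
        (A = A' \<and> B = B' \<and> C = C' \<and> d \<noteq> d')
      \<or> (d = 0 \<and> d' = 0 \<and> A = A' \<and> B = B' \<and> differ_one C C')
      \<or> (d = 1 \<and> d' = 1 \<and> A = A' \<and> C = C' \<and> differ_one B B')
      \<or> (d = 2 \<and> d' = 2 \<and> B = B' \<and> C = C' \<and> differ_one A A'))"

text \<open>A (simple) u-v path in E3C(r,s,t), as the list of its vertices; its length
  (number of edges) is length p - 1.\<close>
definition e3c_path :: "nat \<Rightarrow> nat \<Rightarrow> nat \<Rightarrow> e3vert \<Rightarrow> e3vert \<Rightarrow> e3vert list \<Rightarrow> bool" where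
  "e3c_path r s t u v p \<longleftrightarrow> p \<noteq> [] \<and> hd p = u \<and> last p = v \<and> distinct p \<and>
     set p \<subseteq> e3c_vertices r s t \<and>
     (\<forall>i. Suc i < length p \<longrightarrow> e3c_adj r s t (p ! i) (p ! Suc i))"

end

theory Submission
  imports Defs
begin

text \<open>
  Let \<open>k \<le> t\<close> be the Hamming distance of \<open>C\<close> and \<open>C'\<close>. Every path we use walks, in layer 0 of
  some block \<open>{A'} \<times> {B'} \<times> _ \<times> _\<close>, along a geodesic of the Hamming graph on ternary strings of
  length \<open>t\<close> between two strings at distance at most \<open>k\<close>, and needs at most six more edges to
  get there from \<open>u\<close> and back to \<open>v\<close>; so its length is at most \<open>t + 6\<close>.

  For \<open>d = 2\<close> we go through the blocks of the \<open>2r\<close> neighbours of \<open>A\<close> (entered in layer 2), through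
  layer 0 of the block of \<open>u\<close> itself, and through the block of one neighbour of \<open>B\<close> (entered in
  layer 1). The case \<open>d = 1\<close> is symmetric and uses \<open>r \<le> s\<close>. For \<open>d = 0\<close> the endpoints lie in
  layer 0, and besides one neighbour block of \<open>A\<close> and one of \<open>B\<close> we use the \<open>2t - k\<close> paths that
  first set a coordinate \<open>p\<close> to the value \<open>c\<close> differing from both \<open>C ! p\<close> and \<open>C' ! p\<close>, and
  either the edge \<open>uv\<close> (if \<open>k = 1\<close>) or \<open>min k (2r - 1)\<close> paths that flip one differing coordinate,
  pass through a further neighbour block of \<open>A\<close>, and flip the cyclically next differing coordinate
  last. Since \<open>k \<le> t\<close>, these are at least \<open>2r + 2\<close> paths.
\<close>

lemma e3c_path_iff_successively:
  "e3c_path r s t u v p \<longleftrightarrow> p \<noteq> [] \<and> hd p = u \<and> last p = v \<and> distinct p \<and>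
     set p \<subseteq> e3c_vertices r s t \<and> successively (e3c_adj r s t) p"
  unfolding e3c_path_def successively_conv_nth by simp

lemma e3c_adj_vertices:
  "e3c_adj r s t x y \<Longrightarrow> x \<in> e3c_vertices r s t \<and> y \<in> e3c_vertices r s t"
  by (simp add: e3c_adj_def)

lemma e3c_path_extend:
  assumes "e3c_path r s t x y p" "e3c_adj r s t u x" "e3c_adj r s t y v"
    and "u \<notin> set p" "v \<notin> set p" "u \<noteq> v"
  shows "e3c_path r s t u v (u # p @ [v])"
  using assms e3c_adj_vertices[OF assms(2)] e3c_adj_vertices[OF assms(3)]
  unfolding e3c_path_iff_successively
  by (auto simp: successively_append_iff successively_Cons)

lemma e3c_vertices_iff:
  "(A,B,C,d) \<in> e3c_vertices r s t \<longleftrightarrow> tstr r A \<and> tstr s B \<and> tstr t C \<and> d < 3"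
  unfolding e3c_vertices_def by auto

definition diff_positions :: "nat list \<Rightarrow> nat list \<Rightarrow> nat set" where
  "diff_positions X Y = {i. i < length X \<and> X ! i \<noteq> Y ! i}"

lemma finite_diff_positions [simp]: "finite (diff_positions X Y)"
  unfolding diff_positions_def by simp

lemma card_diff_positions_le: "card (diff_positions X Y) \<le> length X"
  using card_mono[of "{..<length X}" "diff_positions X Y"] by (auto simp: diff_positions_def)

lemma diff_positions_commute: "length X = length Y \<Longrightarrow> diff_positions X Y = diff_positions Y X"
  unfolding diff_positions_def by auto

lemma diff_positions_empty_iff:
  "length X = length Y \<Longrightarrow> diff_positions X Y = {} \<longleftrightarrow> X = Y"
  unfolding diff_positions_def by (auto intro: nth_equalityI)

lemma differ_one_iff: "differ_one X Y \<longleftrightarrow> length X = length Y \<and> card (diff_positions X Y) = 1"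
  unfolding differ_one_def diff_positions_def ..

lemma differ_one_commute: "differ_one X Y \<Longrightarrow> differ_one Y X"
  by (simp add: differ_one_iff diff_positions_commute)

lemma differ_one_neq: "differ_one X Y \<Longrightarrow> X \<noteq> Y"
  by (auto simp: differ_one_iff diff_positions_def)

lemma differ_one_list_update:
  assumes "p < length X" "X ! p \<noteq> c"
  shows "differ_one X (X[p := c])"
proof -
  have "diff_positions X (X[p := c]) = {p}"
    using assms by (auto simp: diff_positions_def nth_list_update)
  then show ?thesis by (simp add: differ_one_iff)
qed

lemma tstr_length: "tstr n X \<Longrightarrow> length X = n"
  by (simp add: tstr_def)

lemma tstr_nth: "tstr n X \<Longrightarrow> j < n \<Longrightarrow> X ! j < 3"
  unfolding tstr_def using nth_mem[of j X] by fastforce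

lemma tstr_iff_nth: "tstr n X \<longleftrightarrow> length X = n \<and> (\<forall>j<n. X ! j < 3)"
  unfolding tstr_def by (force simp: in_set_conv_nth)

lemma tstr_list_update: "tstr n X \<Longrightarrow> c < 3 \<Longrightarrow> tstr n (X[p := c])"
  unfolding tstr_def using set_update_subset_insert[of X p c] by auto

lemma e3c_adj_commute: "e3c_adj r s t x y \<Longrightarrow> e3c_adj r s t y x"
  unfolding e3c_adj_def by (auto dest: differ_one_commute)

lemma e3c_adj_layer_change:
  "tstr r A \<Longrightarrow> tstr s B \<Longrightarrow> tstr t C \<Longrightarrow> d < 3 \<Longrightarrow> d' < 3 \<Longrightarrow> d \<noteq> d'
    \<Longrightarrow> e3c_adj r s t (A,B,C,d) (A,B,C,d')"
  unfolding e3c_adj_def by (auto simp: e3c_vertices_iff)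

lemma e3c_adj_layer0:
  "tstr r A \<Longrightarrow> tstr s B \<Longrightarrow> tstr t C \<Longrightarrow> tstr t C' \<Longrightarrow> differ_one C C'
    \<Longrightarrow> e3c_adj r s t (A,B,C,0) (A,B,C',0)"
  unfolding e3c_adj_def by (auto simp: e3c_vertices_iff dest: differ_one_neq)

lemma e3c_adj_layer1:
  "tstr r A \<Longrightarrow> tstr s B \<Longrightarrow> tstr s B' \<Longrightarrow> tstr t C \<Longrightarrow> differ_one B B'
    \<Longrightarrow> e3c_adj r s t (A,B,C,1) (A,B',C,1)"
  unfolding e3c_adj_def by (auto simp: e3c_vertices_iff dest: differ_one_neq)

lemma e3c_adj_layer2:
  "tstr r A \<Longrightarrow> tstr r A' \<Longrightarrow> tstr s B \<Longrightarrow> tstr t C \<Longrightarrow> differ_one A A'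
    \<Longrightarrow> e3c_adj r s t (A,B,C,2) (A',B,C,2)"
  unfolding e3c_adj_def by (auto simp: e3c_vertices_iff dest: differ_one_neq)

lemma less3_cases: "(x::nat) < 3 \<longleftrightarrow> x = 0 \<or> x = 1 \<or> x = 2"
  by auto

lemma less2_cases: "(x::nat) < 2 \<longleftrightarrow> x = 0 \<or> x = 1"
  by auto

lemma mod3_shift_neq: "(x::nat) < 3 \<Longrightarrow> b < 2 \<Longrightarrow> x \<noteq> (x + 1 + b) mod 3"
  unfolding less3_cases less2_cases by auto

lemma mod3_shift_inj:
  "(x::nat) < 3 \<Longrightarrow> b < 2 \<Longrightarrow> b' < 2 \<Longrightarrow> (x + 1 + b) mod 3 = (x + 1 + b') mod 3 \<Longrightarrow> b = b'"
  unfolding less3_cases less2_cases by auto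

lemma Suc_mod_inj: "i < k \<Longrightarrow> j < k \<Longrightarrow> Suc i mod k = Suc j mod k \<Longrightarrow> i = (j::nat)"
  by (auto simp: mod_Suc split: if_splits)

lemma Suc_mod_neq: "2 \<le> k \<Longrightarrow> i mod k \<noteq> Suc i mod (k::nat)"
  by (auto simp: mod_Suc)

definition hamming_nbr :: "nat list \<Rightarrow> nat \<Rightarrow> nat list" where
  "hamming_nbr X i = X[i div 2 := (X ! (i div 2) + 1 + i mod 2) mod 3]"

lemma hamming_nbr_adjacent:
  assumes "tstr n X" "i < 2 * n"
  shows "tstr n (hamming_nbr X i)" "differ_one X (hamming_nbr X i)"
proof -
  have "X ! (i div 2) < 3" using assms tstr_nth by simp
  then have "X ! (i div 2) \<noteq> (X ! (i div 2) + 1 + i mod 2) mod 3"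
    using mod3_shift_neq[of "X ! (i div 2)" "i mod 2"] by simp
  then show "differ_one X (hamming_nbr X i)"
    unfolding hamming_nbr_def using assms by (intro differ_one_list_update) (auto simp: tstr_def)
  show "tstr n (hamming_nbr X i)"
    unfolding hamming_nbr_def using assms by (intro tstr_list_update) auto
qed

lemma hamming_nbr_neq: "tstr n X \<Longrightarrow> i < 2 * n \<Longrightarrow> hamming_nbr X i \<noteq> X"
  using hamming_nbr_adjacent(2) differ_one_neq by metis

lemma hamming_nbr_inj:
  assumes "tstr n X" "i < 2 * n" "j < 2 * n" "hamming_nbr X i = hamming_nbr X j"
  shows "i = j"
proof (cases "i div 2 = j div 2")
  case True
  let ?x = "X ! (i div 2)"
  have "?x < 3" "i div 2 < length X" using assms tstr_nth by (auto simp: tstr_def)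
  then have "(?x + 1 + i mod 2) mod 3 = (?x + 1 + j mod 2) mod 3"
    using arg_cong[OF assms(4), of "\<lambda>Y. Y ! (i div 2)"] True by (simp add: hamming_nbr_def)
  with \<open>?x < 3\<close> have "i mod 2 = j mod 2" using mod3_shift_inj[of ?x "i mod 2" "j mod 2"] by simp
  then show ?thesis using True by (metis div_mod_decomp)
next
  case False
  have "X ! (i div 2) < 3" "i div 2 < length X" using assms tstr_nth by (auto simp: tstr_def)
  then have "hamming_nbr X i ! (i div 2) \<noteq> X ! (i div 2)"
    using mod3_shift_neq[of "X ! (i div 2)" "i mod 2"] by (simp add: hamming_nbr_def)
  moreover have "hamming_nbr X j ! (i div 2) = X ! (i div 2)"
    using False unfolding hamming_nbr_def by simp
  ultimately show ?thesis using assms(4) by simp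
qed

fun flip_walk :: "nat list \<Rightarrow> nat list \<Rightarrow> nat list \<Rightarrow> nat list list" where
  "flip_walk X T [] = [X]"
| "flip_walk X T (p # ps) = X # flip_walk (X[p := T ! p]) T ps"

definition between :: "nat list \<Rightarrow> nat list \<Rightarrow> nat list set" where
  "between X T = {Y. length Y = length X \<and> (\<forall>j<length X. Y ! j = X ! j \<or> Y ! j = T ! j)}"

lemma between_list_update:
  assumes "p < length X" "length X = length T" "Y \<in> between (X[p := c]) (T[p := c])"
  shows "Y ! p = c" "q \<noteq> p \<Longrightarrow> q < length X \<Longrightarrow> Y ! q = X ! q \<or> Y ! q = T ! q"
  using assms by (auto simp: between_def nth_list_update)

lemma between_list_update_disjoint:
  assumes "p < length X" "length X = length T" "c \<noteq> X ! p" "c \<noteq> T ! p"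
  shows "between (X[p := c]) (T[p := c]) \<inter> between X T = {}"
  using assms between_list_update(1)[OF assms(1,2)] by (force simp: between_def)

lemma tstr_between: "Y \<in> between X T \<Longrightarrow> tstr n X \<Longrightarrow> tstr n T \<Longrightarrow> tstr n Y"
  unfolding between_def tstr_iff_nth by fastforce

lemma length_flip_walk [simp]: "length (flip_walk X T ps) = Suc (length ps)"
  by (induction ps arbitrary: X) auto

lemma hd_flip_walk [simp]: "hd (flip_walk X T ps) = X"
  by (cases ps) auto

lemma flip_walk_nonempty [simp]: "flip_walk X T ps \<noteq> []"
  by (cases ps) auto

lemma between_self [simp]: "X \<in> between X T"
  by (simp add: between_def)

lemma between_list_update_subset: "between (X[p := T ! p]) T \<subseteq> between X T"
  by (cases "p < length X") (auto simp: between_def nth_list_update)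

lemma flip_walk_between: "set (flip_walk X T ps) \<subseteq> between X T"
proof (induction ps arbitrary: X)
  case (Cons p ps)
  then show ?case using between_list_update_subset[of X p T] by auto
qed simp

lemma flip_walk_unflipped: "Y \<in> set (flip_walk X T ps) \<Longrightarrow> j \<notin> set ps \<Longrightarrow> Y ! j = X ! j"
  by (induction ps arbitrary: X) auto

lemma last_flip_walk:
  assumes "diff_positions X T \<subseteq> set ps" "set ps \<subseteq> {..<length X}" "length X = length T"
  shows "last (flip_walk X T ps) = T"
  using assms
proof (induction ps arbitrary: X)
  case Nil
  then show ?case by (simp add: diff_positions_empty_iff)
next
  case (Cons p ps)
  have "diff_positions (X[p := T ! p]) T \<subseteq> set ps"
    using Cons.prems by (auto simp: diff_positions_def nth_list_update split: if_splits)
  then show ?case using Cons.IH Cons.prems by simp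
qed

lemma flip_walk_path:
  "distinct ps \<Longrightarrow> set ps \<subseteq> diff_positions X T \<Longrightarrow>
    distinct (flip_walk X T ps) \<and> successively differ_one (flip_walk X T ps)"
proof (induction ps arbitrary: X)
  case (Cons p ps)
  let ?X' = "X[p := T ! p]"
  have p: "p < length X" "X ! p \<noteq> T ! p" using Cons.prems by (auto simp: diff_positions_def)
  have "set ps \<subseteq> diff_positions ?X' T"
  proof
    fix q assume "q \<in> set ps"
    then have "q \<noteq> p" "q \<in> diff_positions X T" using Cons.prems by auto
    then show "q \<in> diff_positions ?X' T" by (simp add: diff_positions_def)
  qed
  note IH = Cons.IH[OF _ this]
  have "Y ! p \<noteq> X ! p" if "Y \<in> set (flip_walk ?X' T ps)" for Y
    using flip_walk_unflipped[OF that] Cons.prems(1) p by simp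
  then show ?case
    using IH Cons.prems differ_one_list_update[OF p] by (auto simp: successively_Cons)
qed simp

definition hamming_geodesic :: "nat list \<Rightarrow> nat list \<Rightarrow> nat list list" where
  "hamming_geodesic X T = flip_walk X T (sorted_list_of_set (diff_positions X T))"

lemma hamming_geodesic_nonempty [simp]: "hamming_geodesic X T \<noteq> []"
  by (simp add: hamming_geodesic_def)

lemma length_hamming_geodesic [simp]:
  "length (hamming_geodesic X T) = Suc (card (diff_positions X T))"
  by (simp add: hamming_geodesic_def)

lemma hamming_geodesic_between: "set (hamming_geodesic X T) \<subseteq> between X T"
  unfolding hamming_geodesic_def by (rule flip_walk_between)

lemma hamming_geodesic_path:
  assumes "length X = length T"
  shows "hd (hamming_geodesic X T) = X" "last (hamming_geodesic X T) = T"
    "distinct (hamming_geodesic X T)" "successively differ_one (hamming_geodesic X T)"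
proof -
  let ?ps = "sorted_list_of_set (diff_positions X T)"
  have ps: "set ?ps = diff_positions X T" "distinct ?ps" by simp_all
  show "hd (hamming_geodesic X T) = X" by (simp add: hamming_geodesic_def)
  have "set ?ps \<subseteq> {..<length X}" by (auto simp: diff_positions_def)
  then show "last (hamming_geodesic X T) = T"
    unfolding hamming_geodesic_def using last_flip_walk ps(1) assms by simp
  show "distinct (hamming_geodesic X T)" "successively differ_one (hamming_geodesic X T)"
    unfolding hamming_geodesic_def using flip_walk_path[OF ps(2)] ps(1) by simp_all
qed

definition layer0_geodesic :: "nat list \<Rightarrow> nat list \<Rightarrow> nat list \<Rightarrow> nat list \<Rightarrow> e3vert list" where
  "layer0_geodesic A B X T = map (\<lambda>Y. (A,B,Y,0)) (hamming_geodesic X T)"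

lemma length_layer0_geodesic [simp]:
  "length (layer0_geodesic A B X T) = Suc (card (diff_positions X T))"
  by (simp add: layer0_geodesic_def)

lemma set_layer0_geodesic:
  "set (layer0_geodesic A B X T) \<subseteq> {A} \<times> {B} \<times> between X T \<times> {0}"
  unfolding layer0_geodesic_def using hamming_geodesic_between by fastforce

lemma layer0_geodesic_nonempty [simp]: "layer0_geodesic A B X T \<noteq> []"
  by (simp add: layer0_geodesic_def)

lemma layer0_geodesic_layer: "set (layer0_geodesic A B X T) \<subseteq> {A} \<times> {B} \<times> UNIV \<times> {0}"
  by (auto simp: layer0_geodesic_def)

lemma e3c_path_layer0_geodesic:
  assumes "tstr r A" "tstr s B" "tstr t X" "tstr t T"
  shows "e3c_path r s t (A,B,X,0) (A,B,T,0) (layer0_geodesic A B X T)"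
proof -
  have len: "length X = length T" using assms by (simp add: tstr_length)
  note G = hamming_geodesic_path[OF len]
  have "tstr t Y" if "Y \<in> set (hamming_geodesic X T)" for Y
    using that hamming_geodesic_between assms(3,4) tstr_between by blast
  then have "successively (e3c_adj r s t) (layer0_geodesic A B X T)"
    unfolding layer0_geodesic_def successively_map
    using G(4) assms(1,2) by (auto intro: successively_mono e3c_adj_layer0)
  moreover have "set (layer0_geodesic A B X T) \<subseteq> e3c_vertices r s t"
    unfolding layer0_geodesic_def using \<open>\<And>Y. _ \<Longrightarrow> tstr t Y\<close> assms(1,2)
    by (auto simp: e3c_vertices_iff)
  moreover have "distinct (layer0_geodesic A B X T)"
    unfolding layer0_geodesic_def using G(3) by (simp add: distinct_map inj_on_def)
  ultimately show ?thesis
    unfolding e3c_path_iff_successively layer0_geodesic_def using G(1,2)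
    by (simp add: hd_map last_map)
qed

lemma e3c_path_through_layer0:
  assumes "tstr r A" "tstr s B" "e < 3" "tstr t X" "tstr t T" "e \<noteq> 0" "X \<noteq> T"
  shows "e3c_path r s t (A,B,X,e) (A,B,T,e) ((A,B,X,e) # layer0_geodesic A B X T @ [(A,B,T,e)])"
proof (rule e3c_path_extend[OF e3c_path_layer0_geodesic[OF assms(1,2,4,5)]])
  show "e3c_adj r s t (A,B,X,e) (A,B,X,0)" "e3c_adj r s t (A,B,T,0) (A,B,T,e)"
    using assms by (simp_all add: e3c_adj_layer_change)
  show "(A,B,X,e) \<notin> set (layer0_geodesic A B X T)" "(A,B,T,e) \<notin> set (layer0_geodesic A B X T)"
    using layer0_geodesic_layer \<open>e \<noteq> 0\<close> by blast+
qed (use \<open>X \<noteq> T\<close> in simp)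

text \<open>
  \<open>(A', B')\<close> is meant to be a block adjacent to \<open>(A, B)\<close> in layer \<open>e \<noteq> 0\<close>; the walk from \<open>X\<close> to
  \<open>T\<close> is done in layer 0 of that block, and the moves between layers \<open>d\<close> and \<open>e\<close> are dropped
  when \<open>e = d\<close>.
\<close>

definition detour ::
  "nat \<Rightarrow> nat \<Rightarrow> nat list \<Rightarrow> nat list \<Rightarrow> nat list \<Rightarrow> nat list \<Rightarrow> nat list \<Rightarrow> nat list \<Rightarrow> e3vert list"
where
  "detour d e A B A' B' X T =
    (let q = (A,B,X,e) # ((A',B',X,e) # layer0_geodesic A' B' X T @ [(A',B',T,e)]) @ [(A,B,T,e)]
     in if e = d then q else (A,B,X,d) # q @ [(A,B,T,d)])"

lemma length_detour: "length (detour d e A B A' B' X T) \<le> card (diff_positions X T) + 7"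
  by (simp add: detour_def Let_def)

lemma set_detour:
  "set (detour d e A B A' B' X T) =
     {(A,B,X,d), (A,B,T,d), (A,B,X,e), (A,B,T,e), (A',B',X,e), (A',B',T,e)} \<union>
     set (layer0_geodesic A' B' X T)"
  by (auto simp: detour_def Let_def)

lemma e3c_path_detour:
  assumes adj: "\<And>Y. tstr t Y \<Longrightarrow> e3c_adj r s t (A,B,Y,e) (A',B',Y,e)"
    and "e \<noteq> 0" "d < 3" and X: "tstr t X" and T: "tstr t T" and "X \<noteq> T"
  shows "e3c_path r s t (A,B,X,d) (A,B,T,d) (detour d e A B A' B' X T)"
proof -
  have "(A,B,X,e) \<in> e3c_vertices r s t" "(A',B',X,e) \<in> e3c_vertices r s t"
    using e3c_adj_vertices[OF adj[OF X]] by simp_all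
  then have AB: "tstr r A" "tstr s B" "tstr r A'" "tstr s B'" "e < 3"
    by (simp_all add: e3c_vertices_iff)
  have AB': "(A',B') \<noteq> (A,B)"
    using adj[OF X] by (auto simp: e3c_adj_def)
  let ?q0 = "layer0_geodesic A' B' X T"
  let ?q1 = "(A',B',X,e) # ?q0 @ [(A',B',T,e)]"
  let ?q2 = "(A,B,X,e) # ?q1 @ [(A,B,T,e)]"
  have q0: "set ?q0 \<subseteq> {A'} \<times> {B'} \<times> UNIV \<times> {0}"
    by (rule layer0_geodesic_layer)
  have q1: "e3c_path r s t (A',B',X,e) (A',B',T,e) ?q1"
    using AB(3,4,5) X T assms(2,6) by (rule e3c_path_through_layer0)
  have "set ?q1 \<subseteq> {A'} \<times> {B'} \<times> UNIV"
    using q0 by auto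
  then have q2: "e3c_path r s t (A,B,X,e) (A,B,T,e) ?q2"
    using e3c_path_extend[OF q1 adj[OF X] e3c_adj_commute[OF adj[OF T]]] \<open>X \<noteq> T\<close> AB'
    by auto
  show ?thesis
  proof (cases "e = d")
    case True
    then show ?thesis using q2 by (simp add: detour_def)
  next
    case False
    have "set ?q2 \<subseteq> {A} \<times> {B} \<times> UNIV \<times> {e} \<union> {A'} \<times> {B'} \<times> UNIV"
      using q0 by auto
    then have "(A,B,X,d) \<notin> set ?q2" "(A,B,T,d) \<notin> set ?q2"
      using False AB' by auto
    moreover have "e3c_adj r s t (A,B,X,d) (A,B,X,e)" "e3c_adj r s t (A,B,T,e) (A,B,T,d)"
      using AB X T \<open>d < 3\<close> False by (simp_all add: e3c_adj_layer_change)
    ultimately show ?thesis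
      using e3c_path_extend[OF q2] False \<open>X \<noteq> T\<close> by (simp add: detour_def)
  qed
qed

lemma e3c_adj_A_nbr:
  "tstr r A \<Longrightarrow> tstr s B \<Longrightarrow> tstr t Y \<Longrightarrow> i < 2 * r
    \<Longrightarrow> e3c_adj r s t (A,B,Y,2) (hamming_nbr A i,B,Y,2)"
  by (intro e3c_adj_layer2 hamming_nbr_adjacent)

lemma e3c_adj_B_nbr:
  "tstr r A \<Longrightarrow> tstr s B \<Longrightarrow> tstr t Y \<Longrightarrow> i < 2 * s
    \<Longrightarrow> e3c_adj r s t (A,B,Y,1) (A,hamming_nbr B i,Y,1)"
  by (intro e3c_adj_layer1 hamming_nbr_adjacent)

lemma pairwise_Un:
  "pairwise R S \<Longrightarrow> pairwise R T \<Longrightarrow> (\<And>x y. x \<in> S \<Longrightarrow> y \<in> T \<Longrightarrow> R x y \<and> R y x)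
    \<Longrightarrow> pairwise R (S \<union> T)"
  unfolding pairwise_def by blast

text \<open>The last hypothesis excludes two copies of the edge \<open>[u, v]\<close>, the only path without interior.\<close>

lemma internally_disjoint_paths_of_family:
  fixes Q :: "'i \<Rightarrow> e3vert list" and R :: "'i \<Rightarrow> e3vert set"
  assumes "finite J" "N \<le> card J"
    and path: "\<And>j. j \<in> J \<Longrightarrow> e3c_path r s t u v (Q j) \<and> length (Q j) - 1 \<le> L"
    and region: "\<And>j. j \<in> J \<Longrightarrow> set (Q j) \<subseteq> {u,v} \<union> R j"
    and disjoint: "pairwise (\<lambda>i j. R i \<inter> R j \<subseteq> {u,v}) J"
    and long: "pairwise (\<lambda>i j. 2 < length (Q i) \<or> 2 < length (Q j)) J"
  shows "\<exists>P :: nat \<Rightarrow> e3vert list.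
     (\<forall>i < N. e3c_path r s t u v (P i) \<and> length (P i) - 1 \<le> L) \<and>
     (\<forall>i < N. \<forall>j < N. i \<noteq> j \<longrightarrow> P i \<noteq> P j \<and> set (P i) \<inter> set (P j) \<subseteq> {u, v})"
proof -
  obtain f where f: "f ` {..<N} \<subseteq> J" "inj_on f {..<N}"
    using card_le_inj[of "{..<N}" J] assms(1,2) by auto
  show ?thesis
  proof (intro exI[of _ "Q \<circ> f"] conjI allI impI)
    fix i assume "i < N"
    then show "e3c_path r s t u v ((Q \<circ> f) i)" "length ((Q \<circ> f) i) - 1 \<le> L"
      using path f(1) by auto
  next
    fix i j assume ij: "i < N" "j < N" "i \<noteq> j"
    then have fij: "f i \<in> J" "f j \<in> J" "f i \<noteq> f j" using f by (auto dest: inj_onD)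
    then show disj: "set ((Q \<circ> f) i) \<inter> set ((Q \<circ> f) j) \<subseteq> {u,v}"
      using region[OF fij(1)] region[OF fij(2)] pairwiseD[OF disjoint fij] by auto
    show "(Q \<circ> f) i \<noteq> (Q \<circ> f) j"
    proof
      assume eq: "(Q \<circ> f) i = (Q \<circ> f) j"
      have "distinct (Q (f i))" using path fij(1) by (simp add: e3c_path_def)
      then have "length (Q (f i)) = card (set (Q (f i)))" by (simp add: distinct_card)
      also have "\<dots> \<le> card {u,v}" using disj eq by (intro card_mono) auto
      also have "\<dots> \<le> 2" by (simp add: card_insert_le_m1)
      finally show False using pairwiseD[OF long fij] eq by simp
    qed
  qed
qed

text \<open>
  Labels of the paths from \<open>(A, B, C, d)\<close> to \<open>(A, B, C', d)\<close>: through the block of the \<open>i\<close>-th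
  neighbour of \<open>A\<close> or of \<open>B\<close>, through layer 0 of the own block, via the value \<open>c\<close> at
  position \<open>p\<close>, the \<open>j\<close>-th cross path, and the edge between the endpoints.
\<close>

datatype route = Via_A nat | Via_B nat | Direct | Third nat nat | Cross nat | Edge

locale e3c_endpoints =
  fixes r s t :: nat and A B C C' :: "nat list" and d :: nat
  assumes r_pos: "1 \<le> r" and r_le_s: "r \<le> s" and s_le_t: "s \<le> t"
    and A: "tstr r A" and B: "tstr s B" and C: "tstr t C" and C': "tstr t C'"
    and d: "d < 3" and C_neq_C': "C \<noteq> C'"
begin

lemma length_C: "length C = t" "length C' = t"
  using C C' by (simp_all add: tstr_length)

definition k :: nat where
  "k = card (diff_positions C C')"

lemma k_pos: "0 < k"
  unfolding k_def using diff_positions_empty_iff[of C C'] length_C C_neq_C'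
  by (simp add: card_gt_0_iff)

lemma k_le_t: "k \<le> t"
  unfolding k_def using card_diff_positions_le[of C C'] length_C by simp

definition flip_pos :: "nat \<Rightarrow> nat" where
  "flip_pos j = sorted_list_of_set (diff_positions C C') ! (j mod k)"

lemma flip_pos_diff: "flip_pos j \<in> diff_positions C C'"
proof -
  let ?ps = "sorted_list_of_set (diff_positions C C')"
  have "j mod k < length ?ps" using k_pos by (simp add: k_def)
  then have "?ps ! (j mod k) \<in> set ?ps" by (rule nth_mem)
  then show ?thesis by (simp add: flip_pos_def)
qed

lemma flip_pos_less: "flip_pos j < t"
  and flip_pos_differs: "C ! flip_pos j \<noteq> C' ! flip_pos j"
  using flip_pos_diff[of j] length_C by (simp_all add: diff_positions_def)

lemma flip_pos_eq_iff: "flip_pos i = flip_pos j \<longleftrightarrow> i mod k = j mod k"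
proof -
  let ?ps = "sorted_list_of_set (diff_positions C C')"
  have "i mod k < length ?ps" "j mod k < length ?ps" using k_pos by (simp_all add: k_def)
  then show ?thesis by (simp add: flip_pos_def nth_eq_iff_index_eq)
qed

text \<open>
  The \<open>j\<close>-th cross path first flips the \<open>j\<close>-th differing position of \<open>C\<close> and last the
  (cyclically) next one, so that only \<open>k - 2\<close> flips remain for its middle part, and different
  \<open>j\<close> give disjoint pairs of start and end strings.
\<close>

definition cross_start :: "nat \<Rightarrow> nat list" where
  "cross_start j = C[flip_pos j := C' ! flip_pos j]"

definition cross_end :: "nat \<Rightarrow> nat list" where
  "cross_end j = C'[flip_pos (Suc j) := C ! flip_pos (Suc j)]"

lemma nth_cross_start: "x < t \<Longrightarrow> cross_start j ! x = (if x = flip_pos j then C' ! x else C ! x)"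
  unfolding cross_start_def using length_C flip_pos_less[of j] by (simp add: nth_list_update)

lemma nth_cross_end: "x < t \<Longrightarrow> cross_end j ! x = (if x = flip_pos (Suc j) then C ! x else C' ! x)"
  unfolding cross_end_def using length_C flip_pos_less[of "Suc j"] by (simp add: nth_list_update)

lemma length_cross: "length (cross_start j) = t" "length (cross_end j) = t"
  by (simp_all add: cross_start_def cross_end_def length_C)

lemma tstr_cross: "tstr t (cross_start j)" "tstr t (cross_end j)"
  unfolding cross_start_def cross_end_def
  using C C' tstr_nth[OF C flip_pos_less] tstr_nth[OF C' flip_pos_less]
  by (simp_all add: tstr_list_update)

lemma cross_between: "cross_start j \<in> between C C'" "cross_end j \<in> between C C'"
  unfolding between_def by (simp_all add: length_cross length_C nth_cross_start nth_cross_end)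

lemma differ_one_cross: "differ_one C (cross_start j)" "differ_one (cross_end j) C'"
proof -
  show "differ_one C (cross_start j)"
    unfolding cross_start_def using flip_pos_less flip_pos_differs length_C
    by (intro differ_one_list_update) simp_all
  have "differ_one C' (cross_end j)"
    unfolding cross_end_def using flip_pos_less flip_pos_differs length_C
    by (intro differ_one_list_update) (simp_all add: eq_commute)
  then show "differ_one (cross_end j) C'" by (rule differ_one_commute)
qed

lemma flip_pos_Suc_neq: "2 \<le> k \<Longrightarrow> flip_pos j \<noteq> flip_pos (Suc j)" "2 \<le> k \<Longrightarrow> flip_pos (Suc j) \<noteq> flip_pos j"
  using Suc_mod_neq[of k j] by (simp_all add: flip_pos_eq_iff eq_commute)

lemma cross_start_neq: "cross_start j \<noteq> C" "2 \<le> k \<Longrightarrow> cross_start j \<noteq> C'"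
proof -
  show "cross_start j \<noteq> C" using differ_one_neq[OF differ_one_cross(1)] by (simp add: eq_commute)
  assume "2 \<le> k"
  then show "cross_start j \<noteq> C'"
    using flip_pos_Suc_neq nth_cross_start[OF flip_pos_less, of j "Suc j"] flip_pos_differs[of "Suc j"]
    by auto
qed

lemma cross_end_neq: "cross_end j \<noteq> C'" "2 \<le> k \<Longrightarrow> cross_end j \<noteq> C"
proof -
  show "cross_end j \<noteq> C'" using differ_one_neq[OF differ_one_cross(2)] by simp
  assume "2 \<le> k"
  then show "cross_end j \<noteq> C"
    using flip_pos_Suc_neq nth_cross_end[OF flip_pos_less, of j j] flip_pos_differs[of j] by auto
qed

lemma card_diff_positions_cross:
  assumes "2 \<le> k"
  shows "card (diff_positions (cross_start j) (cross_end j)) = k - 2"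
proof -
  have "diff_positions (cross_start j) (cross_end j) =
      diff_positions C C' - {flip_pos j, flip_pos (Suc j)}"
    unfolding diff_positions_def
    using flip_pos_differs[of j] flip_pos_differs[of "Suc j"] flip_pos_less flip_pos_Suc_neq[OF assms]
    by (auto simp: length_cross length_C nth_cross_start nth_cross_end split: if_splits)
  then show ?thesis
    using flip_pos_diff flip_pos_Suc_neq[OF assms] by (simp add: card_Diff_subset k_def)
qed

lemma cross_start_inj:
  assumes "i < k" "j < k" "cross_start i = cross_start j"
  shows "i = j"
proof -
  have "C' ! flip_pos i = (if flip_pos i = flip_pos j then C' ! flip_pos i else C ! flip_pos i)"
    using arg_cong[OF assms(3), of "\<lambda>Y. Y ! flip_pos i"] by (simp add: nth_cross_start flip_pos_less)
  then have "flip_pos i = flip_pos j"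
    using flip_pos_differs[of i] by (auto split: if_splits)
  then show ?thesis using assms(1,2) by (simp add: flip_pos_eq_iff)
qed

lemma cross_end_inj:
  assumes "i < k" "j < k" "cross_end i = cross_end j"
  shows "i = j"
proof -
  have "C ! flip_pos (Suc i) =
      (if flip_pos (Suc i) = flip_pos (Suc j) then C ! flip_pos (Suc i) else C' ! flip_pos (Suc i))"
    using arg_cong[OF assms(3), of "\<lambda>Y. Y ! flip_pos (Suc i)"] by (simp add: nth_cross_end flip_pos_less)
  then have "flip_pos (Suc i) = flip_pos (Suc j)"
    using flip_pos_differs[of "Suc i"] by (auto split: if_splits)
  then show ?thesis using assms(1,2) Suc_mod_inj by (simp add: flip_pos_eq_iff)
qed

lemma cross_start_eq_cross_end:
  assumes ij: "i < k" "j < k" and eq: "cross_start i = cross_end j"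
  shows "i = j"
proof -
  let ?p = "flip_pos i" and ?q = "flip_pos (Suc j)"
  have "C' ! ?p = (if ?p = ?q then C ! ?p else C' ! ?p)"
    using arg_cong[OF eq, of "\<lambda>Y. Y ! ?p"] by (simp add: nth_cross_start nth_cross_end flip_pos_less)
  then have pq: "?p \<noteq> ?q"
    using flip_pos_differs[of i] by (auto split: if_splits)
  have "diff_positions C C' \<subseteq> {?p, ?q}"
  proof
    fix x assume "x \<in> diff_positions C C'"
    then have "x < t" "C ! x \<noteq> C' ! x" using length_C by (auto simp: diff_positions_def)
    then show "x \<in> {?p, ?q}"
      using arg_cong[OF eq, of "\<lambda>Y. Y ! x"] by (auto simp: nth_cross_start nth_cross_end split: if_splits)
  qed
  then have "k \<le> card {?p, ?q}" unfolding k_def by (rule card_mono[rotated]) simp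
  moreover have "card {?p, ?q} \<le> k"
    unfolding k_def using flip_pos_diff by (intro card_mono) simp_all
  ultimately have "k = 2" using pq by simp
  then show ?thesis using pq ij flip_pos_eq_iff[of i "Suc j"] by (auto simp: less2_cases)
qed

definition third_values :: "(nat \<times> nat) set" where
  "third_values = {(p, c). p < t \<and> c < 3 \<and> c \<noteq> C ! p \<and> c \<noteq> C' ! p}"

lemma finite_third_values: "finite third_values"
  by (rule finite_subset[of _ "{..<t} \<times> {..<3}"]) (auto simp: third_values_def)

lemma card_third_values: "card third_values + k = 2 * t"
proof -
  let ?others = "\<lambda>p. {0,1,2} - {C ! p, C' ! p}"
  have "third_values = Sigma {..<t} ?others"
    by (auto simp: third_values_def less3_cases)
  moreover have "card (?others p) + (if p \<in> diff_positions C C' then 1 else 0) = 2" if "p < t" for p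
  proof -
    have "{C ! p, C' ! p} \<subseteq> {0,1,2}" using tstr_nth[OF C that] tstr_nth[OF C' that] less3_cases by auto
    then show ?thesis using that length_C by (simp add: card_Diff_subset diff_positions_def card_insert_if)
  qed
  ultimately have "card third_values + (\<Sum>p<t. if p \<in> diff_positions C C' then 1 else 0) = 2 * t"
    by (simp add: card_SigmaI sum.distrib[symmetric])
  moreover have "(\<Sum>p<t. if p \<in> diff_positions C C' then 1 else 0) = k"
    using length_C by (simp add: sum.If_cases k_def diff_positions_def Int_def conj_commute)
  ultimately show ?thesis by simp
qed

lemma A_nbr_neq: "i < 2 * r \<Longrightarrow> hamming_nbr A i \<noteq> A" "i < 2 * r \<Longrightarrow> A \<noteq> hamming_nbr A i"
  using hamming_nbr_neq[OF A] by metis+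

lemma B_nbr_neq: "i < 2 * s \<Longrightarrow> hamming_nbr B i \<noteq> B" "i < 2 * s \<Longrightarrow> B \<noteq> hamming_nbr B i"
  using hamming_nbr_neq[OF B] by metis+

lemma A_nbr_eq_iff: "i < 2 * r \<Longrightarrow> j < 2 * r \<Longrightarrow> hamming_nbr A i = hamming_nbr A j \<longleftrightarrow> i = j"
  using hamming_nbr_inj[OF A] by blast

lemma B_nbr_eq_iff: "i < 2 * s \<Longrightarrow> j < 2 * s \<Longrightarrow> hamming_nbr B i = hamming_nbr B j \<longleftrightarrow> i = j"
  using hamming_nbr_inj[OF B] by blast

lemma detour_between_endpoints:
  assumes "\<And>Y. tstr t Y \<Longrightarrow> e3c_adj r s t (A,B,Y,e) (A',B',Y,e)" "e \<noteq> 0"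
  shows "e3c_path r s t (A,B,C,d) (A,B,C',d) (detour d e A B A' B' C C')"
    "length (detour d e A B A' B' C C') \<le> t + 7"
    "set (detour d e A B A' B' C C') \<subseteq>
       {(A,B,C,d), (A,B,C',d)} \<union> {A} \<times> {B} \<times> {C,C'} \<times> {e} \<union> {A'} \<times> {B'} \<times> UNIV"
proof -
  show "e3c_path r s t (A,B,C,d) (A,B,C',d) (detour d e A B A' B' C C')"
    using assms d C C' C_neq_C' by (rule e3c_path_detour)
  show "length (detour d e A B A' B' C C') \<le> t + 7"
    using length_detour[of d e A B A' B' C C'] k_le_t by (simp add: k_def)
  show "set (detour d e A B A' B' C C') \<subseteq>
      {(A,B,C,d), (A,B,C',d)} \<union> {A} \<times> {B} \<times> {C,C'} \<times> {e} \<union> {A'} \<times> {B'} \<times> UNIV"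
    unfolding set_detour using set_layer0_geodesic by blast
qed

definition cross_middle :: "nat \<Rightarrow> e3vert list" where
  "cross_middle j =
    (if k = 2 then [(A,B,cross_start j,0)]
     else detour 0 2 A B (hamming_nbr A (Suc j)) B (cross_start j) (cross_end j))"

definition route_path :: "route \<Rightarrow> e3vert list" where
  "route_path \<rho> = (case \<rho> of
      Via_A i \<Rightarrow> detour d 2 A B (hamming_nbr A i) B C C'
    | Via_B i \<Rightarrow> detour d 1 A B A (hamming_nbr B i) C C'
    | Direct \<Rightarrow> (A,B,C,d) # layer0_geodesic A B C C' @ [(A,B,C',d)]
    | Third p c \<Rightarrow> (A,B,C,d) # layer0_geodesic A B (C[p := c]) (C'[p := c]) @ [(A,B,C',d)]
    | Cross j \<Rightarrow> (A,B,C,d) # cross_middle j @ [(A,B,C',d)]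
    | Edge \<Rightarrow> [(A,B,C,d), (A,B,C',d)])"

text \<open>Contains the interior of the route's path; distinct routes get regions meeting at most in the endpoints.\<close>

definition region :: "route \<Rightarrow> e3vert set" where
  "region \<rho> = (case \<rho> of
      Via_A i \<Rightarrow> {A} \<times> {B} \<times> {C,C'} \<times> {2} \<union> {hamming_nbr A i} \<times> {B} \<times> UNIV
    | Via_B i \<Rightarrow> {A} \<times> {B} \<times> {C,C'} \<times> {1} \<union> {A} \<times> {hamming_nbr B i} \<times> UNIV
    | Direct \<Rightarrow> {A} \<times> {B} \<times> UNIV \<times> {0}
    | Third p c \<Rightarrow> {A} \<times> {B} \<times> between (C[p := c]) (C'[p := c]) \<times> {0}
    | Cross j \<Rightarrow> {A} \<times> {B} \<times> {cross_start j, cross_end j} \<times> {0,2}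
        \<union> {hamming_nbr A (Suc j)} \<times> {B} \<times> UNIV
    | Edge \<Rightarrow> {})"

lemma cross_middle_path:
  assumes "2 \<le> k" "Suc j < 2 * r"
  shows "e3c_path r s t (A,B,cross_start j,0) (A,B,cross_end j,0) (cross_middle j)"
    "length (cross_middle j) \<le> k + 5"
    "set (cross_middle j) \<subseteq> region (Cross j)"
proof -
  have len: "length (cross_start j) = length (cross_end j)" by (simp add: length_cross)
  show "length (cross_middle j) \<le> k + 5"
    using length_detour[of 0 2 A B "hamming_nbr A (Suc j)" B "cross_start j" "cross_end j"]
      card_diff_positions_cross[OF assms(1), of j] assms(1)
    by (simp add: cross_middle_def)
  have "set (detour 0 2 A B (hamming_nbr A (Suc j)) B (cross_start j) (cross_end j)) \<subseteq> region (Cross j)"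
    unfolding set_detour region_def route.case using set_layer0_geodesic by blast
  then show "set (cross_middle j) \<subseteq> region (Cross j)"
    by (simp add: cross_middle_def region_def)
  show "e3c_path r s t (A,B,cross_start j,0) (A,B,cross_end j,0) (cross_middle j)"
  proof (cases "k = 2")
    case True
    then have "cross_start j = cross_end j"
      using card_diff_positions_cross[of j] diff_positions_empty_iff[OF len] by simp
    then show ?thesis
      using True A B tstr_cross by (simp add: cross_middle_def e3c_path_def e3c_vertices_iff)
  next
    case False
    then have "diff_positions (cross_start j) (cross_end j) \<noteq> {}"
      using card_diff_positions_cross[of j] assms(1) by auto
    then have "cross_start j \<noteq> cross_end j" using diff_positions_empty_iff[OF len] by simp
    then show ?thesis
      using False e3c_adj_A_nbr[OF A B _ assms(2)] tstr_cross
      by (simp add: cross_middle_def e3c_path_detour)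
  qed
qed

lemma via_A_route:
  assumes "i < 2 * r"
  shows "e3c_path r s t (A,B,C,d) (A,B,C',d) (route_path (Via_A i))"
    "length (route_path (Via_A i)) \<le> t + 7"
    "set (route_path (Via_A i)) \<subseteq> {(A,B,C,d), (A,B,C',d)} \<union> region (Via_A i)"
  using detour_between_endpoints[OF e3c_adj_A_nbr[OF A B _ assms]]
  by (simp_all add: route_path_def region_def Un_assoc)

lemma via_B_route:
  assumes "i < 2 * s"
  shows "e3c_path r s t (A,B,C,d) (A,B,C',d) (route_path (Via_B i))"
    "length (route_path (Via_B i)) \<le> t + 7"
    "set (route_path (Via_B i)) \<subseteq> {(A,B,C,d), (A,B,C',d)} \<union> region (Via_B i)"
  using detour_between_endpoints[OF e3c_adj_B_nbr[OF A B _ assms]]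
  by (simp_all add: route_path_def region_def Un_assoc)

lemma direct_route:
  assumes "d \<noteq> 0"
  shows "e3c_path r s t (A,B,C,d) (A,B,C',d) (route_path Direct)"
    "length (route_path Direct) \<le> t + 7"
    "set (route_path Direct) \<subseteq> {(A,B,C,d), (A,B,C',d)} \<union> region Direct"
proof -
  have geo: "set (layer0_geodesic A B C C') \<subseteq> {A} \<times> {B} \<times> UNIV \<times> {0}"
    using set_layer0_geodesic by blast
  show "e3c_path r s t (A,B,C,d) (A,B,C',d) (route_path Direct)"
    unfolding route_path_def route.case
  proof (rule e3c_path_extend[OF e3c_path_layer0_geodesic[OF A B C C']])
    show "e3c_adj r s t (A,B,C,d) (A,B,C,0)" "e3c_adj r s t (A,B,C',0) (A,B,C',d)"
      using A B C C' d assms by (simp_all add: e3c_adj_layer_change)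
  qed (use geo assms C_neq_C' in auto)
  show "length (route_path Direct) \<le> t + 7"
    using k_le_t by (simp add: route_path_def k_def)
  show "set (route_path Direct) \<subseteq> {(A,B,C,d), (A,B,C',d)} \<union> region Direct"
    unfolding route_path_def region_def route.case using geo by auto
qed

lemma third_route:
  assumes "d = 0" "(p, c) \<in> third_values"
  shows "e3c_path r s t (A,B,C,d) (A,B,C',d) (route_path (Third p c))"
    "length (route_path (Third p c)) \<le> t + 7"
    "set (route_path (Third p c)) \<subseteq> {(A,B,C,d), (A,B,C',d)} \<union> region (Third p c)"
proof -
  have pc: "p < t" "c < 3" "c \<noteq> C ! p" "c \<noteq> C' ! p"
    using assms(2) by (auto simp: third_values_def)
  let ?X = "C[p := c]" and ?T = "C'[p := c]"
  have geo: "set (layer0_geodesic A B ?X ?T) \<subseteq> {A} \<times> {B} \<times> between ?X ?T \<times> {0}"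
    by (rule set_layer0_geodesic)
  have "C \<notin> between ?X ?T" "C' \<notin> between ?X ?T"
    using between_list_update(1)[of p C C' _ c] pc length_C by fastforce+
  then have ends: "(A,B,C,d) \<notin> set (layer0_geodesic A B ?X ?T)"
    "(A,B,C',d) \<notin> set (layer0_geodesic A B ?X ?T)"
    using geo by auto
  show "e3c_path r s t (A,B,C,d) (A,B,C',d) (route_path (Third p c))"
    unfolding route_path_def route.case
  proof (rule e3c_path_extend[OF e3c_path_layer0_geodesic])
    show "e3c_adj r s t (A,B,C,d) (A,B,?X,0)"
      unfolding \<open>d = 0\<close> using pc not_sym[OF pc(3)] length_C A B C
      by (intro e3c_adj_layer0 tstr_list_update differ_one_list_update) simp_all
    have "differ_one C' ?T"
      using pc not_sym[OF pc(4)] length_C by (intro differ_one_list_update) simp_all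
    then show "e3c_adj r s t (A,B,?T,0) (A,B,C',d)"
      unfolding \<open>d = 0\<close> using pc A B C'
      by (intro e3c_adj_layer0 tstr_list_update) (simp_all add: differ_one_commute)
  qed (use A B C C' pc ends C_neq_C' in \<open>simp_all add: tstr_list_update\<close>)
  show "length (route_path (Third p c)) \<le> t + 7"
    using card_diff_positions_le[of ?X ?T] length_C by (simp add: route_path_def)
  show "set (route_path (Third p c)) \<subseteq> {(A,B,C,d), (A,B,C',d)} \<union> region (Third p c)"
    unfolding route_path_def region_def route.case using geo by auto
qed

lemma cross_route:
  assumes "d = 0" "2 \<le> k" "j < k" "Suc j < 2 * r"
  shows "e3c_path r s t (A,B,C,d) (A,B,C',d) (route_path (Cross j))"
    "length (route_path (Cross j)) \<le> t + 7"
    "set (route_path (Cross j)) \<subseteq> {(A,B,C,d), (A,B,C',d)} \<union> region (Cross j)"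
proof -
  note M = cross_middle_path[OF assms(2,4)]
  have "C \<noteq> cross_start j" "C \<noteq> cross_end j" "C' \<noteq> cross_start j" "C' \<noteq> cross_end j"
    using cross_start_neq cross_end_neq assms(2) by metis+
  then have "(A,B,C,d) \<notin> region (Cross j)" "(A,B,C',d) \<notin> region (Cross j)"
    unfolding \<open>d = 0\<close> using A_nbr_neq[OF assms(4)] by (simp_all add: region_def)
  then have ends: "(A,B,C,d) \<notin> set (cross_middle j)" "(A,B,C',d) \<notin> set (cross_middle j)"
    using M(3) by blast+
  have "e3c_adj r s t (A,B,C,d) (A,B,cross_start j,0)" "e3c_adj r s t (A,B,cross_end j,0) (A,B,C',d)"
    unfolding \<open>d = 0\<close> using A B C C' tstr_cross differ_one_cross by (simp_all add: e3c_adj_layer0)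
  then show "e3c_path r s t (A,B,C,d) (A,B,C',d) (route_path (Cross j))"
    unfolding route_path_def route.case using e3c_path_extend[OF M(1)] ends C_neq_C' by simp
  show "length (route_path (Cross j)) \<le> t + 7"
    using M(2) k_le_t by (simp add: route_path_def)
  show "set (route_path (Cross j)) \<subseteq> {(A,B,C,d), (A,B,C',d)} \<union> region (Cross j)"
    unfolding route_path_def route.case using M(3) by auto
qed

lemma edge_route:
  assumes "d = 0" "k = 1"
  shows "e3c_path r s t (A,B,C,d) (A,B,C',d) (route_path Edge)"
    "length (route_path Edge) \<le> t + 7"
    "set (route_path Edge) \<subseteq> {(A,B,C,d), (A,B,C',d)} \<union> region Edge"
proof -
  have "differ_one C C'" using assms(2) length_C by (simp add: differ_one_iff k_def)
  then have "e3c_adj r s t (A,B,C,d) (A,B,C',d)"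
    unfolding \<open>d = 0\<close> using A B C C' by (intro e3c_adj_layer0)
  then show "e3c_path r s t (A,B,C,d) (A,B,C',d) (route_path Edge)"
    using e3c_adj_vertices C_neq_C' by (simp add: route_path_def e3c_path_iff_successively)
qed (simp_all add: route_path_def region_def)

lemma length_route_path_gt_2: "\<rho> \<noteq> Edge \<Longrightarrow> 2 < length (route_path \<rho>)"
  by (cases \<rho>) (simp_all add: route_path_def cross_middle_def detour_def Let_def)

definition third_routes :: "route set" where
  "third_routes = case_prod Third ` third_values"

definition cross_routes :: "route set" where
  "cross_routes = (if k = 1 then {Edge} else Cross ` {..<min k (2 * r - 1)})"

definition routes :: "route set" where
  "routes =
    (if d = 0 then {Via_A 0, Via_B 0} \<union> cross_routes \<union> third_routes
     else if d = 1 then insert Direct (insert (Via_A 0) (Via_B ` {..<2 * r}))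
     else insert Direct (insert (Via_B 0) (Via_A ` {..<2 * r})))"

lemma cross_routesE:
  assumes "\<rho> \<in> cross_routes"
  obtains "\<rho> = Edge" "k = 1" | j where "\<rho> = Cross j" "2 \<le> k" "j < k" "Suc j < 2 * r"
  using assms k_pos by (auto simp: cross_routes_def less_diff_conv split: if_splits)

lemma routes_valid:
  assumes "\<rho> \<in> routes"
  shows "e3c_path r s t (A,B,C,d) (A,B,C',d) (route_path \<rho>) \<and> length (route_path \<rho>) \<le> t + 7 \<and>
    set (route_path \<rho>) \<subseteq> {(A,B,C,d), (A,B,C',d)} \<union> region \<rho>"
proof (cases "d = 0")
  case True
  have r: "0 < 2 * r" "0 < 2 * s" using r_pos r_le_s by simp_all
  from assms True consider "\<rho> = Via_A 0" | "\<rho> = Via_B 0" | "\<rho> \<in> cross_routes"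
    | p c where "\<rho> = Third p c" "(p, c) \<in> third_values"
    unfolding routes_def third_routes_def by auto
  then show ?thesis
  proof cases
    case 3
    then show ?thesis
      by (rule cross_routesE) (use edge_route[OF True] cross_route[OF True] in simp_all)
  qed (use via_A_route[OF r(1)] via_B_route[OF r(2)] third_route[OF True] in simp_all)
next
  case False
  have "\<rho> = Direct \<or> (\<exists>i<2 * r. \<rho> = Via_A i) \<or> (\<exists>i<2 * s. \<rho> = Via_B i)"
    using assms r_pos r_le_s d False unfolding routes_def by (auto split: if_splits)
  then show ?thesis
    using via_A_route via_B_route direct_route[OF False] by (elim disjE exE conjE) blast+
qed

lemma card_routes: "finite routes" "2 * r + 2 \<le> card routes"
proof -
  have "finite routes \<and> 2 * r + 2 \<le> card routes"
  proof -
    have card_Via: "card (f ` {..<2 * r}) = 2 * r" if "inj f" for f :: "nat \<Rightarrow> route"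
      using that by (simp add: card_image inj_on_subset)
    consider "d = 0" | "d = 1" | "d = 2" using d by linarith
    then show ?thesis
    proof cases
      case 1
      have "card third_routes = card third_values"
        unfolding third_routes_def by (rule card_image) (auto simp: inj_on_def)
      moreover have "card cross_routes = (if k = 1 then 1 else min k (2 * r - 1))"
        by (simp add: cross_routes_def card_image inj_on_def)
      moreover have "{Via_A 0, Via_B 0} \<inter> cross_routes = {}"
        "({Via_A 0, Via_B 0} \<union> cross_routes) \<inter> third_routes = {}"
        by (auto simp: cross_routes_def third_routes_def)
      moreover have "finite third_routes" "finite cross_routes"
        using finite_third_values by (simp_all add: third_routes_def cross_routes_def)
      ultimately have "finite routes"
        "card routes = 2 + (if k = 1 then 1 else min k (2 * r - 1)) + card third_values"
        unfolding routes_def using 1 by (simp_all add: card_Un_disjoint)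
      then show ?thesis
        using card_third_values k_le_t k_pos r_pos r_le_s s_le_t by auto
    next
      case 2
      show ?thesis
        unfolding routes_def using 2 card_Via[of Via_B] by (simp add: inj_def card_insert_if image_iff)
    next
      case 3
      show ?thesis
        unfolding routes_def using 3 card_Via[of Via_A] by (simp add: inj_def card_insert_if image_iff)
    qed
  qed
  then show "finite routes" "2 * r + 2 \<le> card routes" by simp_all
qed

lemma regions_disjoint_layer2:
  assumes "d = 2"
  shows "pairwise (\<lambda>\<rho> \<sigma>. region \<rho> \<inter> region \<sigma> \<subseteq> {(A,B,C,d), (A,B,C',d)}) routes"
proof (rule pairwiseI)
  fix \<rho> \<sigma> assume "\<rho> \<in> routes" "\<sigma> \<in> routes" "\<rho> \<noteq> \<sigma>"
  moreover have "routes = insert Direct (insert (Via_B 0) (Via_A ` {..<2 * r}))"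
    unfolding routes_def using assms by simp
  ultimately have "\<rho> \<in> insert Direct (insert (Via_B 0) (Via_A ` {..<2 * r}))"
    "\<sigma> \<in> insert Direct (insert (Via_B 0) (Via_A ` {..<2 * r}))" "\<rho> \<noteq> \<sigma>"
    by simp_all
  moreover have "0 < 2 * s" using r_pos r_le_s by simp
  ultimately show "region \<rho> \<inter> region \<sigma> \<subseteq> {(A,B,C,d), (A,B,C',d)}"
    using A_nbr_neq B_nbr_neq[of 0] A_nbr_eq_iff by (auto simp: region_def assms)
qed

lemma regions_disjoint_layer1:
  assumes "d = 1"
  shows "pairwise (\<lambda>\<rho> \<sigma>. region \<rho> \<inter> region \<sigma> \<subseteq> {(A,B,C,d), (A,B,C',d)}) routes"
proof (rule pairwiseI)
  fix \<rho> \<sigma> assume "\<rho> \<in> routes" "\<sigma> \<in> routes" "\<rho> \<noteq> \<sigma>"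
  moreover have "routes = insert Direct (insert (Via_A 0) (Via_B ` {..<2 * r}))"
    unfolding routes_def using assms by simp
  ultimately have "\<rho> \<in> insert Direct (insert (Via_A 0) (Via_B ` {..<2 * r}))"
    "\<sigma> \<in> insert Direct (insert (Via_A 0) (Via_B ` {..<2 * r}))" "\<rho> \<noteq> \<sigma>"
    by simp_all
  moreover have "0 < 2 * r" using r_pos by simp
  moreover have "hamming_nbr B i \<noteq> B" "B \<noteq> hamming_nbr B i" if "i < 2 * r" for i
    using that r_le_s B_nbr_neq by simp_all
  moreover have "hamming_nbr B i = hamming_nbr B j \<longleftrightarrow> i = j" if "i < 2 * r" "j < 2 * r" for i j
    using that r_le_s B_nbr_eq_iff by simp
  ultimately show "region \<rho> \<inter> region \<sigma> \<subseteq> {(A,B,C,d), (A,B,C',d)}"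
    using A_nbr_neq[of 0] by (auto simp: region_def assms)
qed

lemma between_third_disjoint_between:
  assumes "(p, c) \<in> third_values"
  shows "between (C[p := c]) (C'[p := c]) \<inter> between C C' = {}"
  using assms length_C by (intro between_list_update_disjoint) (auto simp: third_values_def)

lemma between_third_disjoint:
  assumes "(p, c) \<in> third_values" "(p', c') \<in> third_values" "(p, c) \<noteq> (p', c')"
  shows "between (C[p := c]) (C'[p := c]) \<inter> between (C[p' := c']) (C'[p' := c']) = {}"
proof -
  have pc: "p < t" "p' < t" "c' \<noteq> C ! p'" "c' \<noteq> C' ! p'"
    using assms(1,2) by (auto simp: third_values_def)
  have False if "Y \<in> between (C[p := c]) (C'[p := c])" "Y \<in> between (C[p' := c']) (C'[p' := c'])" for Y
  proof -
    have "Y ! p' = c'"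
      using between_list_update(1)[of p' C C' Y c'] that(2) pc length_C by simp
    show False
    proof (cases "p = p'")
      case True
      then show False
        using between_list_update(1)[of p C C' Y c] that(1) \<open>Y ! p' = c'\<close> pc assms(3) length_C by simp
    next
      case False
      then have "Y ! p' = C ! p' \<or> Y ! p' = C' ! p'"
        using between_list_update(2)[of p C C' Y c p'] that(1) pc length_C by simp
      then show False using \<open>Y ! p' = c'\<close> pc by auto
    qed
  qed
  then show ?thesis by blast
qed

lemma region_Via_A_Via_B: "i < 2 * r \<Longrightarrow> j < 2 * s \<Longrightarrow> region (Via_A i) \<inter> region (Via_B j) = {}"
  using A_nbr_neq B_nbr_neq by (auto simp: region_def)

lemma region_Via_A_Cross:
  assumes "2 \<le> k" "Suc j < 2 * r"
  shows "region (Via_A 0) \<inter> region (Cross j) = {}"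
proof -
  have "hamming_nbr A 0 \<noteq> hamming_nbr A (Suc j)" using A_nbr_eq_iff assms(2) by simp
  then show ?thesis
    using cross_start_neq cross_end_neq(2)[OF assms(1)] cross_start_neq(2)[OF assms(1)]
      cross_end_neq A_nbr_neq assms(2)
    by (auto simp: region_def)
qed

lemma region_Via_B_Cross: "i < 2 * s \<Longrightarrow> Suc j < 2 * r \<Longrightarrow> region (Via_B i) \<inter> region (Cross j) = {}"
  using A_nbr_neq B_nbr_neq by (auto simp: region_def)

lemma region_Cross_Cross:
  assumes "i < k" "j < k" "Suc i < 2 * r" "Suc j < 2 * r" "i \<noteq> j"
  shows "region (Cross i) \<inter> region (Cross j) = {}"
proof -
  have "hamming_nbr A (Suc i) \<noteq> hamming_nbr A (Suc j)" using A_nbr_eq_iff assms by simp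
  moreover have "cross_start i \<noteq> cross_start j" "cross_end i \<noteq> cross_end j"
    "cross_start i \<noteq> cross_end j" "cross_start j \<noteq> cross_end i"
    using cross_start_inj[OF assms(1,2)] cross_end_inj[OF assms(1,2)]
      cross_start_eq_cross_end[OF assms(1,2)] cross_start_eq_cross_end[OF assms(2,1)] assms(5)
    by auto
  ultimately show ?thesis
    using A_nbr_neq assms by (auto simp: region_def)
qed

lemma region_Third_Third:
  "(p, c) \<in> third_values \<Longrightarrow> (p', c') \<in> third_values \<Longrightarrow> (p, c) \<noteq> (p', c')
    \<Longrightarrow> region (Third p c) \<inter> region (Third p' c') = {}"
  unfolding region_def route.case using between_third_disjoint by blast

lemma region_layer0_between:
  assumes "\<rho> \<in> {Via_A 0, Via_B 0} \<union> cross_routes"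
  shows "region \<rho> \<inter> {A} \<times> {B} \<times> UNIV \<times> {0} \<subseteq> {A} \<times> {B} \<times> between C C' \<times> {0}"
proof -
  have "0 < 2 * r" "0 < 2 * s" using r_pos r_le_s by simp_all
  then have "region (Via_A 0) \<inter> {A} \<times> {B} \<times> UNIV \<times> {0} = {}"
    "region (Via_B 0) \<inter> {A} \<times> {B} \<times> UNIV \<times> {0} = {}"
    using A_nbr_neq B_nbr_neq by (auto simp: region_def)
  moreover have "region \<rho> \<inter> {A} \<times> {B} \<times> UNIV \<times> {0} \<subseteq> {A} \<times> {B} \<times> between C C' \<times> {0}"
    if "\<rho> \<in> cross_routes"
  proof (rule cross_routesE[OF that])
    fix j assume "\<rho> = Cross j" "Suc j < 2 * r"
    then show ?thesis using A_nbr_neq cross_between by (auto simp: region_def)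
  qed (simp add: region_def)
  ultimately show ?thesis using assms by blast
qed

lemma region_Third_disjoint:
  assumes "(p, c) \<in> third_values" "\<rho> \<in> {Via_A 0, Via_B 0} \<union> cross_routes"
  shows "region (Third p c) \<inter> region \<rho> = {}"
proof -
  have "region (Third p c) \<subseteq> {A} \<times> {B} \<times> between (C[p := c]) (C'[p := c]) \<times> {0}"
    by (simp add: region_def)
  then show ?thesis
    using region_layer0_between[OF assms(2)] between_third_disjoint_between[OF assms(1)] by blast
qed

lemma regions_disjoint_lifts_cross:
  "pairwise (\<lambda>\<rho> \<sigma>. region \<rho> \<inter> region \<sigma> = {}) ({Via_A 0, Via_B 0} \<union> cross_routes)"
proof (rule pairwise_Un)
  have r: "0 < 2 * r" "0 < 2 * s" using r_pos r_le_s by simp_all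
  then show "pairwise (\<lambda>\<rho> \<sigma>. region \<rho> \<inter> region \<sigma> = {}) {Via_A 0, Via_B 0}"
    using region_Via_A_Via_B by (simp add: pairwise_insert Int_commute)
  show "pairwise (\<lambda>\<rho> \<sigma>. region \<rho> \<inter> region \<sigma> = {}) cross_routes"
  proof (cases "k = 1")
    case False
    have "pairwise (\<lambda>\<rho> \<sigma>. region \<rho> \<inter> region \<sigma> = {}) (Cross ` {..<min k (2 * r - 1)})"
      by (rule pairwise_imageI) (simp add: region_Cross_Cross less_diff_conv)
    then show ?thesis using False by (simp add: cross_routes_def)
  qed (simp add: cross_routes_def)
  fix \<rho> \<sigma> assume \<rho>: "\<rho> \<in> {Via_A 0, Via_B 0}" and \<sigma>: "\<sigma> \<in> cross_routes"
  have "region \<rho> \<inter> region \<sigma> = {}"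
  proof (rule cross_routesE[OF \<sigma>])
    fix j assume "\<sigma> = Cross j" "2 \<le> k" "Suc j < 2 * r"
    then show ?thesis using \<rho> region_Via_A_Cross region_Via_B_Cross[OF r(2)] by auto
  qed (simp add: region_def)
  then show "region \<rho> \<inter> region \<sigma> = {} \<and> region \<sigma> \<inter> region \<rho> = {}" by (simp add: Int_commute)
qed

lemma regions_disjoint_layer0:
  assumes "d = 0"
  shows "pairwise (\<lambda>\<rho> \<sigma>. region \<rho> \<inter> region \<sigma> = {}) routes"
proof -
  have "pairwise (\<lambda>\<rho> \<sigma>. region \<rho> \<inter> region \<sigma> = {}) third_routes"
    unfolding third_routes_def
  proof (rule pairwise_imageI)
    fix x y assume "x \<in> third_values" "y \<in> third_values" "x \<noteq> y"
      "case_prod Third x \<noteq> case_prod Third y"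
    then show "region (case_prod Third x) \<inter> region (case_prod Third y) = {}"
      using region_Third_Third[of "fst x" "snd x" "fst y" "snd y"] by (simp add: case_prod_beta)
  qed
  then have "pairwise (\<lambda>\<rho> \<sigma>. region \<rho> \<inter> region \<sigma> = {}) ({Via_A 0, Via_B 0} \<union> cross_routes \<union> third_routes)"
  proof (rule pairwise_Un[OF regions_disjoint_lifts_cross])
    fix \<rho> \<sigma> assume "\<rho> \<in> {Via_A 0, Via_B 0} \<union> cross_routes" "\<sigma> \<in> third_routes"
    then show "region \<rho> \<inter> region \<sigma> = {} \<and> region \<sigma> \<inter> region \<rho> = {}"
      using region_Third_disjoint by (auto simp: third_routes_def Int_commute)
  qed
  then show ?thesis unfolding routes_def using assms by simp
qed

lemma regions_pairwise:
  "pairwise (\<lambda>\<rho> \<sigma>. region \<rho> \<inter> region \<sigma> \<subseteq> {(A,B,C,d), (A,B,C',d)}) routes"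
proof -
  consider "d = 0" | "d = 1" | "d = 2" using d by linarith
  then show ?thesis
  proof cases
    case 1
    show ?thesis using regions_disjoint_layer0[OF 1] by (rule pairwise_mono) auto
  qed (use regions_disjoint_layer1 regions_disjoint_layer2 in simp_all)
qed

lemma routes_pairwise_long:
  "pairwise (\<lambda>\<rho> \<sigma>. 2 < length (route_path \<rho>) \<or> 2 < length (route_path \<sigma>)) routes"
proof (rule pairwiseI)
  fix \<rho> \<sigma> :: route assume "\<rho> \<noteq> \<sigma>"
  then have "\<rho> \<noteq> Edge \<or> \<sigma> \<noteq> Edge" by blast
  then show "2 < length (route_path \<rho>) \<or> 2 < length (route_path \<sigma>)"
    using length_route_path_gt_2 by blast
qed

end

theorem lemma7:
  fixes r s t :: nat and A B C C' :: "nat list" and d :: nat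
  assumes "1 \<le> r" "r \<le> s" "s \<le> t"
    and "(A,B,C,d) \<in> e3c_vertices r s t" "(A,B,C',d) \<in> e3c_vertices r s t"
    and "(A,B,C,d) \<noteq> (A,B,C',d)"
  shows "\<exists>P :: nat \<Rightarrow> e3vert list.
     (\<forall>i < 2*r+2. e3c_path r s t (A,B,C,d) (A,B,C',d) (P i) \<and> length (P i) - 1 \<le> t + 6) \<and>
     (\<forall>i < 2*r+2. \<forall>j < 2*r+2. i \<noteq> j \<longrightarrow>
        P i \<noteq> P j \<and> set (P i) \<inter> set (P j) \<subseteq> {(A,B,C,d), (A,B,C',d)})"
proof -
  interpret e3c_endpoints r s t A B C C' d
    using assms by unfold_locales (auto simp: e3c_vertices_iff)
  show ?thesis
  proof (rule internally_disjoint_paths_of_family[where J = routes and Q = route_path and R = region])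
    fix \<rho> assume "\<rho> \<in> routes"
    from routes_valid[OF this]
    show "e3c_path r s t (A,B,C,d) (A,B,C',d) (route_path \<rho>) \<and> length (route_path \<rho>) - 1 \<le> t + 6"
      and "set (route_path \<rho>) \<subseteq> {(A,B,C,d), (A,B,C',d)} \<union> region \<rho>"
      by auto
  qed (use card_routes regions_pairwise routes_pairwise_long in simp_all)
qed

end
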